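(* Let $\mathcal G$ be a directed acyclic graph and $W$ a subset of its vertex set such that the induced subgraph $\mathcal G|_W$ is connected. The following are equivalent: (a) $\mathcal G|_W$ is path-induced; (b) $\mathcal G/(\mathcal G|_W)$ is acyclic; (c) there is a topological sort of $\mathcal G$ in which the vertices of $W$ are consecutive. Moreover, under any of these equivalent conditions, there is a bijection between topological sorts of $\mathcal G$ in which the vertices of $W$ are consecutive and pairs consisting of a topological sort of $\mathcal G|_W$ and a topological sort of $\mathcal G/(\mathcal G|_W)$.
   Context: The induced subgraph $\mathcal G|_W$ has vertex set $W$ and all edges of $\mathcal G$ between vertices of $W$. It is path-induced if for all $x,y\in W$, every path from $x$ to $y$ in $\mathcal G$ is contained in $\mathcal G|_W$. The contraction $\mathcal G/(\mathcal G|_W)$ (for connected $\mathcal G|_W$) is the graph minor obtained by contracting every edge of $\mathcal G|_W$: its vertex set is $(\text{vertices of }\mathcal G\setminus W)+\{x_W\}$; for $x,y\ne x_W$ its edges $x\to y$ are those of $\mathcal G$; there is an edge $x_W\to y$ for each $z\in W$ and edge $z\to y$ of $\mathcal G$; an edge $x\to x_W$ for each $z\in W$ and edge $x\to z$ of $\mathcal G$; and no edges from $x_W$ to $x_W$. Connectedness is weak (underlying undirected graph). *)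

theory Defs
  imports "Graph_Theory.Graph_Theory"
begin

definition acyclic_digraph :: "('a,'b) pre_digraph \<Rightarrow> bool" where
  "acyclic_digraph G \<equiv> \<not> (\<exists>p. pre_digraph.cycle G p)"

definition path_induced :: "('a,'b) pre_digraph \<Rightarrow> 'a set \<Rightarrow> bool" where
  "path_induced G W \<equiv> \<forall>x\<in>W. \<forall>y\<in>W. \<forall>p.
      pre_digraph.apath G x p y \<longrightarrow> pre_digraph.awalk (G \<restriction> W) x p y"

text \<open>Contraction G/(G|W): the vertex x_W is None, other vertices v are Some v.
  Arcs inside W are deleted; the remaining arcs keep their identity, with endpoints
  in W redirected to x_W (so parallel arcs are kept, as in the paper).\<close>
definition contract :: "('a,'b) pre_digraph \<Rightarrow> 'a set \<Rightarrow> ('a option,'b) pre_digraph" where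
  "contract G W \<equiv>
    \<lparr> verts = Some ` (verts G - W) \<union> {None},
      arcs = {e \<in> arcs G. \<not> (tail G e \<in> W \<and> head G e \<in> W)},
      tail = (\<lambda>e. if tail G e \<in> W then None else Some (tail G e)),
      head = (\<lambda>e. if head G e \<in> W then None else Some (head G e)) \<rparr>"

definition topo_sort :: "('a,'b) pre_digraph \<Rightarrow> 'a list \<Rightarrow> bool" where
  "topo_sort G xs \<equiv> distinct xs \<and> set xs = verts G \<and>
     (\<forall>e\<in>arcs G. \<exists>i j. i < j \<and> j < length xs \<and> xs ! i = tail G e \<and> xs ! j = head G e)"

definition consecutive_in :: "'a set \<Rightarrow> 'a list \<Rightarrow> bool" where
  "consecutive_in W xs \<equiv> \<exists>as bs cs. xs = as @ bs @ cs \<and> set bs = W"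

end

theory Submission
  imports Defs
begin

text \<open>
  Everything goes through path-convexity of \<open>W\<close>: no directed walk leaves \<open>W\<close> and
  comes back. In an acyclic graph every walk is a path, so (a) is exactly this convexity,
  and a walk that leaves and re-enters \<open>W\<close> contracts to a cycle through \<open>x\<^sub>W\<close>, so (b)
  implies it as well. A convex \<open>W\<close> admits a topological sort with \<open>W\<close> consecutive: first
  the vertices outside \<open>W\<close> from which \<open>W\<close> is reachable, then \<open>W\<close>, then the rest.
  Collapsing the block \<open>W\<close> of such a sort to \<open>x\<^sub>W\<close> gives a topological sort of the
  contraction, which is therefore acyclic. Conversely, substituting a topological sort of
  \<open>G|\<^sub>W\<close> for \<open>x\<^sub>W\<close> in one of the contraction yields a sort of \<open>G\<close>; this substitution is
  the bijection, being injective because the block \<open>W\<close> is recovered from the list.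
\<close>

definition precedes :: "'a \<Rightarrow> 'a \<Rightarrow> 'a list \<Rightarrow> bool" where
  "precedes a b xs \<longleftrightarrow> (\<exists>i j. i < j \<and> j < length xs \<and> xs ! i = a \<and> xs ! j = b)"

lemma precedes_Nil [simp]: "\<not> precedes a b []"
  by (simp add: precedes_def)

lemma precedes_Cons [simp]:
  "precedes a b (x # xs) \<longleftrightarrow> (x = a \<and> b \<in> set xs) \<or> precedes a b xs"
proof
  assume "precedes a b (x # xs)"
  then obtain i j where ij: "i < j" "j < Suc (length xs)" "(x # xs) ! i = a" "(x # xs) ! j = b"
    by (auto simp: precedes_def)
  then obtain j' where j: "j = Suc j'"
    by (cases j) auto
  show "(x = a \<and> b \<in> set xs) \<or> precedes a b xs"
  proof (cases i)
    case 0
    then show ?thesis using ij j by auto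
  next
    case (Suc i')
    then show ?thesis using ij j unfolding precedes_def by auto
  qed
next
  assume "(x = a \<and> b \<in> set xs) \<or> precedes a b xs"
  then show "precedes a b (x # xs)"
  proof
    assume "x = a \<and> b \<in> set xs"
    then obtain j where "j < length xs" "xs ! j = b" "x = a"
      by (auto simp: in_set_conv_nth)
    then show ?thesis unfolding precedes_def
      by (intro exI[of _ 0] exI[of _ "Suc j"]) auto
  next
    assume "precedes a b xs"
    then obtain i j where "i < j" "j < length xs" "xs ! i = a" "xs ! j = b"
      by (auto simp: precedes_def)
    then show ?thesis unfolding precedes_def
      by (intro exI[of _ "Suc i"] exI[of _ "Suc j"]) auto
  qed
qed

lemma precedes_append [simp]:
  "precedes a b (xs @ ys) \<longleftrightarrow> precedes a b xs \<or> (a \<in> set xs \<and> b \<in> set ys) \<or> precedes a b ys"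
  by (induction xs) auto

lemma precedes_in_set: "precedes a b xs \<Longrightarrow> a \<in> set xs \<and> b \<in> set xs"
  by (induction xs) auto

lemma precedes_trans: "distinct xs \<Longrightarrow> precedes a b xs \<Longrightarrow> precedes b c xs \<Longrightarrow> precedes a c xs"
  by (induction xs) (auto dest: precedes_in_set)

lemma precedes_irrefl: "distinct xs \<Longrightarrow> \<not> precedes a a xs"
  by (induction xs) (auto dest: precedes_in_set)

lemma precedes_map_Some [simp]: "precedes (Some a) (Some b) (map Some xs) \<longleftrightarrow> precedes a b xs"
  by (induction xs) auto

lemma precedes_concat_map:
  "precedes a b zs \<Longrightarrow> x \<in> set (f a) \<Longrightarrow> y \<in> set (f b) \<Longrightarrow> precedes x y (concat (map f zs))"
  by (induction zs) auto

lemma finite_acyclic_linear_extension: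
  assumes "finite V" "acyclic R"
  shows "\<exists>xs. distinct xs \<and> set xs = V \<and> (\<forall>a\<in>V. \<forall>b\<in>V. (a, b) \<in> R \<longrightarrow> precedes a b xs)"
  using assms(1)
proof (induction V rule: finite_remove_induct)
  case empty
  show ?case by simp
next
  case (remove A)
  have "wf (R \<inter> A \<times> A)"
    using remove.hyps(1) assms(2) by (intro finite_acyclic_wf) (auto intro: acyclic_subset)
  then obtain m where m: "m \<in> A" "\<And>y. (y, m) \<in> R \<inter> A \<times> A \<Longrightarrow> y \<notin> A"
    using wfE_min remove.hyps(2) by (metis ex_in_conv)
  obtain xs where xs: "distinct xs" "set xs = A - {m}"
    "\<forall>a\<in>A - {m}. \<forall>b\<in>A - {m}. (a, b) \<in> R \<longrightarrow> precedes a b xs"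
    using remove.IH[OF m(1)] by blast
  have "distinct (m # xs)" "set (m # xs) = A"
    using xs m(1) by auto
  moreover have "precedes a b (m # xs)" if "a \<in> A" "b \<in> A" "(a, b) \<in> R" for a b
  proof -
    have "b \<noteq> m"
      using that m(2) by blast
    then show ?thesis
      using that xs by (cases "a = m") auto
  qed
  ultimately show ?case by blast
qed

lemma topo_sort_iff_precedes:
  "topo_sort G xs \<longleftrightarrow>
     distinct xs \<and> set xs = verts G \<and> (\<forall>e\<in>arcs G. precedes (tail G e) (head G e) xs)"
  by (simp add: topo_sort_def precedes_def)

definition path_convex :: "('a,'b) pre_digraph \<Rightarrow> 'a set \<Rightarrow> bool" where
  "path_convex G W \<longleftrightarrow> (\<forall>u\<in>W. \<forall>w\<in>W. \<forall>v. u \<rightarrow>\<^sup>*\<^bsub>G\<^esub> v \<and> v \<rightarrow>\<^sup>*\<^bsub>G\<^esub> w \<longrightarrow> v \<in> W)"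

context wf_digraph
begin

lemma topo_sort_awalk_precedes:
  assumes "topo_sort G xs" "awalk u p v" "p \<noteq> []"
  shows "precedes u v xs"
  using assms(2,3)
proof (induction p arbitrary: u)
  case Nil
  then show ?case by simp
next
  case (Cons e p)
  then have e: "e \<in> arcs G" "u = tail G e" and p: "awalk (head G e) p v"
    by (simp_all add: awalk_Cons_iff)
  have first: "precedes u (head G e) xs"
    using assms(1) e by (simp add: topo_sort_iff_precedes)
  show ?case
  proof (cases "p = []")
    case True
    then show ?thesis using p first by (simp add: awalk_Nil_iff)
  next
    case False
    then have "precedes (head G e) v xs" using Cons.IH p by blast
    then show ?thesis
      using first assms(1) precedes_trans by (auto simp: topo_sort_iff_precedes)
  qed
qed

lemma topo_sort_imp_acyclic_digraph: "topo_sort G xs \<Longrightarrow> acyclic_digraph G"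
  unfolding acyclic_digraph_def cycle_def
  by (metis topo_sort_awalk_precedes precedes_irrefl topo_sort_iff_precedes)

lemma acyclic_arcs_ends_if_acyclic_digraph:
  assumes "acyclic_digraph G"
  shows "acyclic (arcs_ends G)"
  unfolding acyclic_def
proof (intro allI notI)
  fix u assume "u \<rightarrow>\<^sup>+ u"
  then obtain p where "awalk u p u" "p \<noteq> []"
    by (auto simp: reachable1_awalk)
  then have "closed_w p"
    by (auto simp: closed_w_def)
  then show False
    using closed_w_imp_cycle assms by (auto simp: acyclic_digraph_def)
qed

lemma apath_if_awalk_acyclic:
  assumes "acyclic_digraph G" "awalk u p v"
  shows "apath u p v"
proof (rule ccontr)
  assume "\<not> apath u p v"
  then have "\<not> distinct (awalk_verts u p)"
    using assms(2) by (simp add: apath_def)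
  then obtain w r where "awalk w r w" "0 < length r"
    using awalk_not_distinct_decomp[OF assms(2)] by metis
  then have "closed_w r"
    by (auto simp: closed_w_def)
  then show False
    using closed_w_imp_cycle assms(1) by (auto simp: acyclic_digraph_def)
qed

lemma path_convex_imp_path_induced:
  assumes "path_convex G W"
  shows "path_induced G W"
  unfolding path_induced_def
proof (intro ballI allI impI)
  fix u w p assume "u \<in> W" "w \<in> W" "apath u p w"
  then have walk: "awalk u p w"
    by (simp add: apath_def)
  have "v \<in> W" if "v \<in> set (awalk_verts u p)" for v
    using assms \<open>u \<in> W\<close> \<open>w \<in> W\<close> awalk_verts_reachable_from[OF walk that]
      awalk_verts_reachable_to[OF walk that]
    unfolding path_convex_def by blast
  then show "pre_digraph.awalk (G \<restriction> W) u p w"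
    using awalk_induce[OF walk] by blast
qed

lemma path_induced_imp_path_convex:
  assumes "acyclic_digraph G" "path_induced G W"
  shows "path_convex G W"
  unfolding path_convex_def
proof (intro ballI allI impI)
  interpret GW: wf_digraph "G \<restriction> W"
    by (rule wellformed_induce_subgraph)
  fix u w v assume "u \<in> W" "w \<in> W" "u \<rightarrow>\<^sup>* v \<and> v \<rightarrow>\<^sup>* w"
  then obtain p q where p: "awalk u p v" and q: "awalk v q w"
    by (auto simp: reachable_awalk)
  then have "apath u (p @ q) w"
    using apath_if_awalk_acyclic assms(1) awalk_appendI by blast
  then have "pre_digraph.awalk (G \<restriction> W) u (p @ q) w"
    using assms(2) \<open>u \<in> W\<close> \<open>w \<in> W\<close> unfolding path_induced_def by blast
  moreover have "pre_digraph.awalk_verts (G \<restriction> W) = awalk_verts"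
    using compatible_awalk_verts compatible_induce_subgraph by blast
  moreover have "awlast u p = v"
    using p by blast
  ultimately have "pre_digraph.awalk (G \<restriction> W) u p v"
    using GW.awalk_append_iff by metis
  then show "v \<in> W"
    using GW.awalk_last_in_verts by simp
qed

end

definition contract_vert :: "'a set \<Rightarrow> 'a \<Rightarrow> 'a option" where
  "contract_vert W v = (if v \<in> W then None else Some v)"

lemma contract_simps:
  "verts (contract G W) = Some ` (verts G - W) \<union> {None}"
  "arcs (contract G W) = {e \<in> arcs G. \<not> (tail G e \<in> W \<and> head G e \<in> W)}"
  "tail (contract G W) e = contract_vert W (tail G e)"
  "head (contract G W) e = contract_vert W (head G e)"
  by (auto simp: contract_def contract_vert_def)

lemma wf_digraph_contract:
  assumes "wf_digraph G" "W \<subseteq> verts G"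
  shows "wf_digraph (contract G W)"
  using assms unfolding wf_digraph_def contract_def by auto

lemma (in wf_digraph) reachable_contract:
  assumes "W \<subseteq> verts G" "u \<rightarrow>\<^sup>* v"
  shows "contract_vert W u \<rightarrow>\<^sup>*\<^bsub>contract G W\<^esub> contract_vert W v"
proof -
  interpret C: wf_digraph "contract G W"
    using wf_digraph_contract[OF wf_digraph assms(1)] .
  from assms(2) show ?thesis
  proof (induction rule: reachable_induct)
    case base
    then show ?case
      by (intro C.reachable_refl) (auto simp: contract_simps contract_vert_def)
  next
    case (step x y)
    then obtain e where e: "e \<in> arcs G" "tail G e = x" "head G e = y"
      by auto
    show ?case
    proof (cases "x \<in> W \<and> y \<in> W")
      case True
      then show ?thesis
        using step.IH by (simp add: contract_vert_def)
    next
      case False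
      then have "contract_vert W x \<rightarrow>\<^bsub>contract G W\<^esub> contract_vert W y"
        using e by (force simp: arcs_ends_conv contract_simps)
      then show ?thesis
        using step.IH C.reachable_adj_trans by blast
    qed
  qed
qed

lemma (in wf_digraph) acyclic_contract_imp_path_convex:
  assumes "W \<subseteq> verts G" "acyclic_digraph (contract G W)"
  shows "path_convex G W"
  unfolding path_convex_def
proof (intro ballI allI impI)
  interpret C: wf_digraph "contract G W"
    using wf_digraph_contract[OF wf_digraph assms(1)] .
  fix u w v assume "u \<in> W" "w \<in> W" and reach: "u \<rightarrow>\<^sup>* v \<and> v \<rightarrow>\<^sup>* w"
  show "v \<in> W"
  proof (rule ccontr)
    assume "v \<notin> W"
    then have "contract_vert W u = None" "contract_vert W v = Some v" "contract_vert W w = None"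
      using \<open>u \<in> W\<close> \<open>w \<in> W\<close> by (simp_all add: contract_vert_def)
    then have "None \<rightarrow>\<^sup>*\<^bsub>contract G W\<^esub> Some v" "Some v \<rightarrow>\<^sup>*\<^bsub>contract G W\<^esub> None"
      using reachable_contract[OF assms(1)] reach by metis+
    then have "None \<rightarrow>\<^sup>+\<^bsub>contract G W\<^esub> None"
      using C.reachable_neq_reachable1 C.reachable1_reachable_trans by blast
    then show False
      using C.acyclic_arcs_ends_if_acyclic_digraph[OF assms(2)] by (auto simp: acyclic_def)
  qed
qed

lemma (in fin_digraph) path_convex_imp_consecutive_topo_sort:
  assumes "acyclic_digraph G" "W \<subseteq> verts G" "path_convex G W"
  shows "\<exists>xs. topo_sort G xs \<and> consecutive_in W xs"
proof -
  define A where "A = {v \<in> verts G - W. \<exists>w\<in>W. v \<rightarrow>\<^sup>* w}"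
  define C where "C = verts G - W - A"
  have forward: "x \<in> A \<and> y \<in> A \<union> W \<union> C \<or> x \<in> W \<and> y \<in> W \<union> C \<or> x \<in> C \<and> y \<in> C"
    if "x \<rightarrow> y" for x y
  proof -
    have "x \<in> verts G" "y \<in> verts G"
      using that by (auto dest: adj_in_verts)
    moreover have "x \<in> A \<union> W" if "y \<in> A \<union> W"
    proof -
      obtain w where "w \<in> W" "y \<rightarrow>\<^sup>* w"
        using \<open>y \<in> A \<union> W\<close> \<open>y \<in> verts G\<close> unfolding A_def by blast
      then show ?thesis
        using \<open>x \<rightarrow> y\<close> \<open>x \<in> verts G\<close> adj_reachable_trans unfolding A_def by blast
    qed
    moreover have "y \<notin> A" if "x \<in> W"
      using \<open>x \<rightarrow> y\<close> \<open>x \<in> W\<close> assms(3) unfolding A_def path_convex_def by blast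
    ultimately show ?thesis
      unfolding C_def by blast
  qed
  have acyclic: "acyclic (arcs_ends G)"
    using assms(1) by (rule acyclic_arcs_ends_if_acyclic_digraph)
  have "finite A" "finite W" "finite C"
    using assms(2) unfolding A_def C_def by (auto intro: finite_subset[OF _ finite_verts])
  note linear_extension = finite_acyclic_linear_extension[OF _ acyclic]
  obtain as where
    as: "distinct as" "set as = A" "\<forall>a\<in>A. \<forall>b\<in>A. a \<rightarrow> b \<longrightarrow> precedes a b as"
    using linear_extension[OF \<open>finite A\<close>] by blast
  obtain bs where
    bs: "distinct bs" "set bs = W" "\<forall>a\<in>W. \<forall>b\<in>W. a \<rightarrow> b \<longrightarrow> precedes a b bs"
    using linear_extension[OF \<open>finite W\<close>] by blast
  obtain cs where
    cs: "distinct cs" "set cs = C" "\<forall>a\<in>C. \<forall>b\<in>C. a \<rightarrow> b \<longrightarrow> precedes a b cs"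
    using linear_extension[OF \<open>finite C\<close>] by blast
  have "topo_sort G (as @ bs @ cs)"
    unfolding topo_sort_iff_precedes
  proof (intro conjI ballI)
    show "distinct (as @ bs @ cs)" "set (as @ bs @ cs) = verts G"
      using as bs cs assms(2) unfolding A_def C_def by auto
    fix e assume "e \<in> arcs G"
    then have "tail G e \<rightarrow> head G e"
      by (rule in_arcs_imp_in_arcs_ends)
    then show "precedes (tail G e) (head G e) (as @ bs @ cs)"
      using forward[of "tail G e" "head G e"] as bs cs by auto
  qed
  then show ?thesis
    unfolding consecutive_in_def using bs(2) by blast
qed

lemma topo_sort_restrict_contract:
  assumes "topo_sort G (as @ bs @ cs)" "set bs = W"
  shows "topo_sort (G \<restriction> W) bs \<and> topo_sort (contract G W) (map Some as @ None # map Some cs)"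
proof -
  let ?xs = "as @ bs @ cs"
  have distinct: "distinct ?xs" and verts: "set ?xs = verts G"
    and arcs: "\<And>e. e \<in> arcs G \<Longrightarrow> precedes (tail G e) (head G e) ?xs"
    using assms(1) by (auto simp: topo_sort_iff_precedes)
  then have disjoint: "set as \<inter> W = {}" "set cs \<inter> W = {}" "set as \<inter> set cs = {}"
    using assms(2) by auto
  have "topo_sort (G \<restriction> W) bs"
    unfolding topo_sort_iff_precedes
  proof (intro conjI ballI)
    show "distinct bs" "set bs = verts (G \<restriction> W)"
      using distinct assms(2) by simp_all
    fix e assume "e \<in> arcs (G \<restriction> W)"
    then show "precedes (tail (G \<restriction> W) e) (head (G \<restriction> W) e) bs"
      using arcs[of e] disjoint by (auto dest: precedes_in_set)
  qed
  moreover have "topo_sort (contract G W) (map Some as @ None # map Some cs)"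
    unfolding topo_sort_iff_precedes
  proof (intro conjI ballI)
    show "distinct (map Some as @ None # map Some cs)"
      using distinct disjoint by (auto simp: distinct_map)
    show "set (map Some as @ None # map Some cs) = verts (contract G W)"
      using verts assms(2) disjoint by (auto simp: contract_simps)
    fix e assume "e \<in> arcs (contract G W)"
    then have "e \<in> arcs G" "\<not> (tail G e \<in> W \<and> head G e \<in> W)"
      by (simp_all add: contract_simps)
    then have "precedes (tail G e) (head G e) as \<or> precedes (tail G e) (head G e) cs
        \<or> tail G e \<in> set as \<and> (head G e \<in> W \<or> head G e \<in> set cs)
        \<or> tail G e \<in> W \<and> head G e \<in> set cs"
      using arcs[of e] assms(2) by (auto dest: precedes_in_set)
    then show "precedes (tail (contract G W) e) (head (contract G W) e)
        (map Some as @ None # map Some cs)"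
      using disjoint by (auto simp: contract_simps contract_vert_def dest: precedes_in_set)
  qed
  ultimately show ?thesis ..
qed

lemma topo_sort_contract_split:
  assumes "topo_sort (contract G W) zs"
  obtains as cs where "zs = map Some as @ None # map Some cs" "set as \<inter> W = {}" "set cs \<inter> W = {}"
proof -
  have "None \<in> set zs"
    using assms by (auto simp: topo_sort_iff_precedes contract_simps)
  then obtain p q where zs: "zs = p @ None # q"
    by (meson split_list)
  have "None \<notin> set p" "None \<notin> set q"
    using assms zs by (auto simp: topo_sort_iff_precedes)
  moreover have "xs = map Some (map the xs)" if "None \<notin> set xs" for xs :: "'a option list"
    using that by (induction xs) auto
  ultimately have zs': "zs = map Some (map the p) @ None # map Some (map the q)"
    using zs by metis
  have "a \<notin> W" if "Some a \<in> set zs" for a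
    using assms that by (auto simp: topo_sort_iff_precedes contract_simps)
  then have "set (map the p) \<inter> W = {}" "set (map the q) \<inter> W = {}"
    unfolding zs' by auto
  with zs' show ?thesis
    by (rule that)
qed

definition uncontract :: "'a list \<Rightarrow> 'a option list \<Rightarrow> 'a list" where
  "uncontract ys zs = concat (map (case_option ys (\<lambda>v. [v])) zs)"

lemma uncontract_split [simp]: "uncontract ys (map Some as @ None # map Some cs) = as @ ys @ cs"
  by (simp add: uncontract_def comp_def)

lemma topo_sort_uncontract:
  assumes "W \<subseteq> verts G" "topo_sort (G \<restriction> W) ys" "topo_sort (contract G W) zs"
  shows "topo_sort G (uncontract ys zs)"
proof -
  obtain as cs where zs: "zs = map Some as @ None # map Some cs"
    using topo_sort_contract_split[OF assms(3)] .
  have ys: "distinct ys" "set ys = W"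
    and arcs_W: "\<And>e. e \<in> arcs (G \<restriction> W) \<Longrightarrow> precedes (tail G e) (head G e) ys"
    using assms(2) by (auto simp: topo_sort_iff_precedes)
  have "distinct zs" "set zs = verts (contract G W)"
    and arcs_C: "\<And>e. e \<in> arcs (contract G W) \<Longrightarrow>
      precedes (contract_vert W (tail G e)) (contract_vert W (head G e)) zs"
    using assms(3) by (auto simp: topo_sort_iff_precedes contract_simps)
  then have "distinct as" "distinct cs" "set as \<inter> set cs = {}" "set as \<union> set cs = verts G - W"
    unfolding zs contract_simps by (auto simp: distinct_map)
  then have "distinct (uncontract ys zs)" "set (uncontract ys zs) = verts G"
    using ys assms(1) unfolding zs by auto
  moreover have "precedes (tail G e) (head G e) (uncontract ys zs)" if "e \<in> arcs G" for e
  proof (cases "tail G e \<in> W \<and> head G e \<in> W")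
    case True
    then show ?thesis
      using arcs_W[of e] that unfolding zs by simp
  next
    case False
    then have "precedes (contract_vert W (tail G e)) (contract_vert W (head G e)) zs"
      using arcs_C that by (simp add: contract_simps)
    then show ?thesis
      unfolding uncontract_def
      by (rule precedes_concat_map) (auto simp: contract_vert_def ys(2))
  qed
  ultimately show ?thesis
    by (simp add: topo_sort_iff_precedes)
qed

lemma block_decomposition_unique:
  assumes "as @ bs @ cs = as' @ bs' @ cs'" "W \<noteq> {}"
    and "set bs = W" "set as \<inter> W = {}" "set cs \<inter> W = {}"
    and "set bs' = W" "set as' \<inter> W = {}" "set cs' \<inter> W = {}"
  shows "as = as' \<and> bs = bs' \<and> cs = cs'"
proof -
  have split: "takeWhile (\<lambda>x. x \<notin> W) (as @ bs @ cs) = as \<and>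
      takeWhile (\<lambda>x. x \<in> W) (bs @ cs) = bs \<and> dropWhile (\<lambda>x. x \<in> W) (bs @ cs) = cs"
    if "set bs = W" "set as \<inter> W = {}" "set cs \<inter> W = {}" for as bs cs :: "'a list"
    using that assms(2)
    by (cases bs; cases cs) (auto simp: disjoint_iff)
  have "as = as'"
    using split[of bs as cs] split[of bs' as' cs'] assms by metis
  then have "bs @ cs = bs' @ cs'"
    using assms(1) by simp
  then show ?thesis
    using \<open>as = as'\<close> split[of bs as cs] split[of bs' as' cs'] assms by metis
qed

lemma bij_betw_uncontract:
  assumes "W \<subseteq> verts G" "W \<noteq> {}"
  shows "bij_betw (\<lambda>(ys, zs). uncontract ys zs)
    ({ys. topo_sort (G \<restriction> W) ys} \<times> {zs. topo_sort (contract G W) zs})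
    {xs. topo_sort G xs \<and> consecutive_in W xs}"
proof (rule bij_betw_imageI)
  show "inj_on (\<lambda>(ys, zs). uncontract ys zs)
    ({ys. topo_sort (G \<restriction> W) ys} \<times> {zs. topo_sort (contract G W) zs})"
  proof (rule inj_onI, clarsimp)
    fix ys zs ys' zs'
    assume ys: "topo_sort (G \<restriction> W) ys" "topo_sort (G \<restriction> W) ys'"
      and zs: "topo_sort (contract G W) zs" "topo_sort (contract G W) zs'"
      and eq: "uncontract ys zs = uncontract ys' zs'"
    obtain as cs where "zs = map Some as @ None # map Some cs" "set as \<inter> W = {}" "set cs \<inter> W = {}"
      using topo_sort_contract_split[OF zs(1)] .
    moreover obtain as' cs' where
      "zs' = map Some as' @ None # map Some cs'" "set as' \<inter> W = {}" "set cs' \<inter> W = {}"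
      using topo_sort_contract_split[OF zs(2)] .
    moreover have "set ys = W" "set ys' = W"
      using ys by (simp_all add: topo_sort_iff_precedes)
    ultimately show "ys = ys' \<and> zs = zs'"
      using eq block_decomposition_unique[of as ys cs as' ys' cs' W] assms(2) by auto
  qed
  show "(\<lambda>(ys, zs). uncontract ys zs) `
      ({ys. topo_sort (G \<restriction> W) ys} \<times> {zs. topo_sort (contract G W) zs})
    = {xs. topo_sort G xs \<and> consecutive_in W xs}"
  proof (intro equalityI subsetI)
    fix xs assume "xs \<in> (\<lambda>(ys, zs). uncontract ys zs) `
      ({ys. topo_sort (G \<restriction> W) ys} \<times> {zs. topo_sort (contract G W) zs})"
    then obtain ys zs where ys: "topo_sort (G \<restriction> W) ys" and zs: "topo_sort (contract G W) zs"
      and xs: "xs = uncontract ys zs"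
      by auto
    obtain as cs where "zs = map Some as @ None # map Some cs"
      using topo_sort_contract_split[OF zs] .
    moreover have "set ys = W"
      using ys by (simp add: topo_sort_iff_precedes)
    ultimately show "xs \<in> {xs. topo_sort G xs \<and> consecutive_in W xs}"
      using topo_sort_uncontract[OF assms(1) ys zs] xs unfolding consecutive_in_def by auto
  next
    fix xs assume "xs \<in> {xs. topo_sort G xs \<and> consecutive_in W xs}"
    then obtain as bs cs where xs: "xs = as @ bs @ cs" "topo_sort G xs" "set bs = W"
      unfolding consecutive_in_def by blast
    then have "(bs, map Some as @ None # map Some cs) \<in>
        {ys. topo_sort (G \<restriction> W) ys} \<times> {zs. topo_sort (contract G W) zs}"
      using topo_sort_restrict_contract by blast
    then show "xs \<in> (\<lambda>(ys, zs). uncontract ys zs) `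
        ({ys. topo_sort (G \<restriction> W) ys} \<times> {zs. topo_sort (contract G W) zs})"
      using xs(1) by (force intro: rev_image_eqI)
  qed
qed

theorem lemma3p20:
  fixes G :: "('a,'b) pre_digraph" and W :: "'a set"
  assumes "fin_digraph G"
    and "acyclic_digraph G"
    and "W \<subseteq> verts G"
    and "connected (G \<restriction> W)"
  shows "(path_induced G W \<longleftrightarrow> acyclic_digraph (contract G W))
    \<and> (acyclic_digraph (contract G W) \<longleftrightarrow> (\<exists>xs. topo_sort G xs \<and> consecutive_in W xs))
    \<and> (path_induced G W \<longrightarrow>
         (\<exists>f. bij_betw f {xs. topo_sort G xs \<and> consecutive_in W xs}
                ({ys. topo_sort (G \<restriction> W) ys} \<times> {zs. topo_sort (contract G W) zs})))"
proof -
  interpret fin_digraph G by fact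
  have "W \<noteq> {}"
    using assms(4) by (auto simp: connected_def strongly_connected_def)
  have a_imp_c: "path_induced G W \<Longrightarrow> \<exists>xs. topo_sort G xs \<and> consecutive_in W xs"
    using path_induced_imp_path_convex path_convex_imp_consecutive_topo_sort assms(2,3) by blast
  have c_imp_b: "(\<exists>xs. topo_sort G xs \<and> consecutive_in W xs) \<Longrightarrow> acyclic_digraph (contract G W)"
    unfolding consecutive_in_def
    using topo_sort_restrict_contract wf_digraph.topo_sort_imp_acyclic_digraph
      wf_digraph_contract[OF wf_digraph assms(3)] by blast
  have b_imp_a: "acyclic_digraph (contract G W) \<Longrightarrow> path_induced G W"
    using acyclic_contract_imp_path_convex path_convex_imp_path_induced assms(3) by blast
  show ?thesis
    using a_imp_c c_imp_b b_imp_a bij_betw_inv_into[OF bij_betw_uncontract[OF assms(3) \<open>W \<noteq> {}\<close>]] by blast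
qed

end
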